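(* Let $(\lambda_0,\dots,\lambda_n)\in\mathbb{C}^{n+1}$ and assume $E_{(\lambda_0,\dots,\lambda_n)}$ is closed under complex conjugation. Let $M_n:=\max\{|\mathrm{Im}\,\lambda_j|: j=0,\dots,n\}$. Then for all real $a<b$ with $b-a<\pi/M_n$ (interpreted as no restriction when $M_n=0$), $E_{(\lambda_0,\dots,\lambda_n)}$ is an extended Chebyshev system over the interval $[a,b]$.
   Context: $E_{(\lambda_0,\dots,\lambda_n)}$ denotes the space of all $f\in C^\infty(\mathbb{R},\mathbb{C})$ with $(\frac{d}{dx}-\lambda_0)\cdots(\frac{d}{dx}-\lambda_n)f=0$ (dimension $n+1$). A zero of order $k$ at $a$ means $f(a)=\dots=f^{(k-1)}(a)=0$, $f^{(k)}(a)\ne0$. $E_{(\lambda_0,\dots,\lambda_n)}$ is an extended Chebyshev system over a set $A\subset\mathbb{R}$ if every nonzero element has at most $n$ zeros in $A$ counted with multiplicity. Closed under complex conjugation means $\overline f\in E_{(\lambda_0,\dots,\lambda_n)}$ whenever $f\in E_{(\lambda_0,\dots,\lambda_n)}$. *)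

theory Defs
  imports "HOL-Analysis.Analysis"
begin

fun vderiv :: "nat \<Rightarrow> (real \<Rightarrow> complex) \<Rightarrow> real \<Rightarrow> complex" where
  "vderiv 0 f = f"
| "vderiv (Suc k) f = (\<lambda>x. vector_derivative (vderiv k f) (at x))"

definition smooth_fun :: "(real \<Rightarrow> complex) \<Rightarrow> bool" where
  "smooth_fun f \<longleftrightarrow> (\<forall>k x. vderiv k f differentiable (at x))"

definition shift_op :: "complex \<Rightarrow> (real \<Rightarrow> complex) \<Rightarrow> real \<Rightarrow> complex" where
  "shift_op c g = (\<lambda>x. vector_derivative g (at x) - c * g x)"

fun diff_op :: "(nat \<Rightarrow> complex) \<Rightarrow> nat \<Rightarrow> (real \<Rightarrow> complex) \<Rightarrow> real \<Rightarrow> complex" where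
  "diff_op lam 0 f = shift_op (lam 0) f"
| "diff_op lam (Suc n) f = diff_op lam n (shift_op (lam (Suc n)) f)"

definition E_space :: "(nat \<Rightarrow> complex) \<Rightarrow> nat \<Rightarrow> (real \<Rightarrow> complex) set" where
  "E_space lam n = {f. smooth_fun f \<and> diff_op lam n f = (\<lambda>x. 0)}"

definition zero_of_order :: "(real \<Rightarrow> complex) \<Rightarrow> real \<Rightarrow> nat \<Rightarrow> bool" where
  "zero_of_order f a k \<longleftrightarrow> (\<forall>i<k. vderiv i f a = 0) \<and> vderiv k f a \<noteq> 0"

text \<open>Every nonzero element has at most n zeros in A counted with multiplicity:
  for any finite set of points of A, the orders of the zeros there sum to at most n.
  (Points where f vanishes to infinite order would count as infinitely many zeros;
  we express this by allowing any lower bounds m x on the vanishing order.)\<close>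
definition ext_chebyshev :: "(real \<Rightarrow> complex) set \<Rightarrow> nat \<Rightarrow> real set \<Rightarrow> bool" where
  "ext_chebyshev E n A \<longleftrightarrow>
     (\<forall>f\<in>E. f \<noteq> (\<lambda>x. 0) \<longrightarrow>
        (\<forall>S m. finite S \<and> S \<subseteq> A \<and> (\<forall>x\<in>S. \<forall>i<m x. vderiv i f x = 0)
               \<longrightarrow> sum m S \<le> n))"

definition closed_cnj :: "(real \<Rightarrow> complex) set \<Rightarrow> bool" where
  "closed_cnj E \<longleftrightarrow> (\<forall>f\<in>E. (\<lambda>x. cnj (f x)) \<in> E)"

end

theory Submission
  imports Defs
begin

text \<open>
  Conjugation-closedness of the space reduces the theorem to real-valued
  solutions: the real and imaginary parts of a solution are again solutions, and every
  zero of the solution is a zero of both parts.  For real-valued solutions we induct on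
  the order of the operator, peeling off factors at the top:

  \<^item> a real factor (d/dx - c): by a Rolle argument applied to the weighted Wronskian
    with the positive weight e^{cx}, the factored-out function has at most one zero
    fewer than the original one;
  \<^item> a pair of conjugate factors (d/dx - l)(d/dx - cnj l): the weight is the real part
    of e^{l(x-c)}, which stays positive on [a,b] precisely because |Im l|(b - a) < pi;
    two Rolle arguments lose at most two zeros;
  \<^item> a non-real factor whose conjugate does not occur: it can be dropped, since a
    real-valued solution is then already annihilated by the remaining operator.
\<close>

section \<open>Smooth complex-valued functions of a real variable\<close>

abbreviation dv :: "(real \<Rightarrow> complex) \<Rightarrow> real \<Rightarrow> complex" where
  "dv f \<equiv> (\<lambda>x. vector_derivative f (at x))"

lemma vderiv_Suc': "vderiv (Suc k) f = vderiv k (dv f)"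
  by (induction k) auto

lemma has_dv: "f differentiable (at x) \<Longrightarrow> (f has_vector_derivative dv f x) (at x)"
  by (simp add: vector_derivative_works)

lemma smooth_differentiable: "smooth_fun f \<Longrightarrow> f differentiable (at x)"
  unfolding smooth_fun_def by (metis vderiv.simps(1))

lemma smooth_dv: "smooth_fun f \<Longrightarrow> smooth_fun (dv f)"
  unfolding smooth_fun_def by (metis vderiv_Suc')

lemma dv_add: "f differentiable (at x) \<Longrightarrow> g differentiable (at x) \<Longrightarrow>
   dv (\<lambda>x. f x + g x) x = dv f x + dv g x"
  by (intro vector_derivative_at has_vector_derivative_add has_dv)

lemma dv_diff: "f differentiable (at x) \<Longrightarrow> g differentiable (at x) \<Longrightarrow>
   dv (\<lambda>x. f x - g x) x = dv f x - dv g x"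
  by (intro vector_derivative_at has_vector_derivative_diff has_dv)

lemma dv_cmult: "f differentiable (at x) \<Longrightarrow> dv (\<lambda>x. c * f x) x = c * dv f x"
  by (intro vector_derivative_at has_vector_derivative_mult_right has_dv)

lemma dv_mult: "f differentiable (at x) \<Longrightarrow> g differentiable (at x) \<Longrightarrow>
   dv (\<lambda>x. f x * g x) x = dv f x * g x + f x * dv g x"
  using vector_derivative_at[OF has_vector_derivative_mult[OF has_dv has_dv]]
  by (simp add: algebra_simps)

lemma has_dv_exp: "((\<lambda>x. exp ((c::complex) * of_real x)) has_vector_derivative c * exp (c * of_real x)) (at x)"
  by (rule has_vector_derivative_real_field) (auto intro!: derivative_eq_intros)

lemma dv_exp: "dv (\<lambda>x. C * exp (c * of_real x)) x = c * (C * exp (c * of_real x))"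
  using vector_derivative_at[OF has_vector_derivative_mult_right[OF has_dv_exp]]
  by (simp add: mult_ac)

text \<open>Linearity of the iterated derivative; for sums only differentiability of the lower
  derivatives is needed, which is what makes the product rule below provable.\<close>

lemma vderiv_add_upto:
  "(\<forall>j<k. \<forall>x. vderiv j f differentiable (at x)) \<Longrightarrow> (\<forall>j<k. \<forall>x. vderiv j g differentiable (at x)) \<Longrightarrow>
   vderiv k (\<lambda>x. f x + g x) = (\<lambda>x. vderiv k f x + vderiv k g x)"
proof (induction k arbitrary: f g)
  case 0 then show ?case by simp
next
  case (Suc k)
  have "dv (\<lambda>x. f x + g x) = (\<lambda>x. dv f x + dv g x)"
    using Suc.prems by (intro ext dv_add) (metis vderiv.simps(1) zero_less_Suc)+
  then have "vderiv (Suc k) (\<lambda>x. f x + g x) = vderiv k (\<lambda>x. dv f x + dv g x)"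
    by (simp only: vderiv_Suc')
  also have "\<dots> = (\<lambda>x. vderiv k (dv f) x + vderiv k (dv g) x)"
    using Suc.prems by (intro Suc.IH) (auto simp flip: vderiv_Suc')
  finally show ?case by (simp only: vderiv_Suc')
qed

lemma vderiv_add: "smooth_fun f \<Longrightarrow> smooth_fun g \<Longrightarrow>
   vderiv k (\<lambda>x. f x + g x) = (\<lambda>x. vderiv k f x + vderiv k g x)"
  unfolding smooth_fun_def by (intro vderiv_add_upto) blast+

lemma vderiv_cmult: "smooth_fun f \<Longrightarrow> vderiv k (\<lambda>x. c * f x) = (\<lambda>x. c * vderiv k f x)"
proof (induction k arbitrary: f)
  case (Suc k)
  have "dv (\<lambda>x. c * f x) = (\<lambda>x. c * dv f x)"
    using Suc.prems by (intro ext dv_cmult smooth_differentiable)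
  then show ?case using Suc.IH[OF smooth_dv[OF Suc.prems]] by (simp only: vderiv_Suc')
qed simp

lemma vderiv_cnj: "smooth_fun f \<Longrightarrow> vderiv k (\<lambda>x. cnj (f x)) = (\<lambda>x. cnj (vderiv k f x))"
proof (induction k arbitrary: f)
  case (Suc k)
  have "dv (\<lambda>x. cnj (f x)) = (\<lambda>x. cnj (dv f x))"
    using Suc.prems by (intro ext vector_derivative_cnj smooth_differentiable)
  then show ?case using Suc.IH[OF smooth_dv[OF Suc.prems]] by (simp only: vderiv_Suc')
qed simp

lemma smooth_cmult: "smooth_fun f \<Longrightarrow> smooth_fun (\<lambda>x. c * f x)"
  by (auto simp: vderiv_cmult smooth_fun_def)

lemma smooth_add: "smooth_fun f \<Longrightarrow> smooth_fun g \<Longrightarrow> smooth_fun (\<lambda>x. f x + g x)"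
  by (simp add: smooth_fun_def vderiv_add)

lemma vderiv_diff:
  assumes f: "smooth_fun f" and g: "smooth_fun g"
  shows "vderiv k (\<lambda>x. f x - g x) = (\<lambda>x. vderiv k f x - vderiv k g x)"
proof -
  have e: "(\<lambda>x. f x - g x) = (\<lambda>x. f x + (-1) * g x)" by simp
  show ?thesis
    unfolding e vderiv_add[OF f smooth_cmult[OF g]] vderiv_cmult[OF g] by simp
qed

lemma smooth_diff: "smooth_fun f \<Longrightarrow> smooth_fun g \<Longrightarrow> smooth_fun (\<lambda>x. f x - g x)"
  by (simp add: smooth_fun_def vderiv_diff)

lemma smooth_cnj: "smooth_fun f \<Longrightarrow> smooth_fun (\<lambda>x. cnj (f x))"
  by (simp add: smooth_fun_def vderiv_cnj differentiable_cnj_iff)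

text \<open>Smoothness of products; the induction must range over all orders at once, since
  the k-th derivative of a product involves lower derivatives of the factors.\<close>
lemma smooth_mult:
  assumes "smooth_fun f" "smooth_fun g" shows "smooth_fun (\<lambda>x. f x * g x)"
proof -
  have "vderiv k (\<lambda>x. f x * g x) differentiable (at x)"
    if "smooth_fun f" "smooth_fun g" for k f g x
    using that
  proof (induction k arbitrary: f g x rule: less_induct)
    case (less k)
    show ?case
    proof (cases k)
      case 0 then show ?thesis using less.prems by (simp add: smooth_differentiable)
    next
      case (Suc j)
      have sd: "smooth_fun (dv f)" "smooth_fun (dv g)" using less.prems by (auto intro: smooth_dv)
      have "dv (\<lambda>x. f x * g x) = (\<lambda>x. dv f x * g x + f x * dv g x)"
        using less.prems by (intro ext dv_mult smooth_differentiable)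
      then have "vderiv k (\<lambda>x. f x * g x) = vderiv j (\<lambda>x. dv f x * g x + f x * dv g x)"
        by (simp only: Suc vderiv_Suc')
      also have "\<dots> = (\<lambda>x. vderiv j (\<lambda>x. dv f x * g x) x + vderiv j (\<lambda>x. f x * dv g x) x)"
        using less.IH less.prems sd Suc by (intro vderiv_add_upto) auto
      finally show ?thesis using less.IH less.prems sd Suc by simp
    qed
  qed
  then show ?thesis using assms unfolding smooth_fun_def by blast
qed

lemma vderiv_Suc_mult:
  assumes "smooth_fun p" "smooth_fun \<phi>"
  shows "vderiv (Suc i) (\<lambda>y. p y * \<phi> y) =
    (\<lambda>y. vderiv i (\<lambda>y. dv p y * \<phi> y) y + vderiv i (\<lambda>y. p y * dv \<phi> y) y)"
proof -
  have "dv (\<lambda>y. p y * \<phi> y) = (\<lambda>y. dv p y * \<phi> y + p y * dv \<phi> y)"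
    using assms by (intro ext dv_mult smooth_differentiable)
  then have "vderiv (Suc i) (\<lambda>y. p y * \<phi> y) = vderiv i (\<lambda>y. dv p y * \<phi> y + p y * dv \<phi> y)"
    by (simp only: vderiv_Suc')
  also have "\<dots> = (\<lambda>y. vderiv i (\<lambda>y. dv p y * \<phi> y) y + vderiv i (\<lambda>y. p y * dv \<phi> y) y)"
    using assms by (intro vderiv_add smooth_mult smooth_dv)
  finally show ?thesis .
qed

text \<open>All derivatives of e^{cx} are multiples of e^{cx}.\<close>
lemma smooth_exp: "smooth_fun (\<lambda>x. exp (c * of_real x))"
proof -
  have "vderiv k (\<lambda>x. exp (c * of_real x)) = (\<lambda>x. c ^ k * exp (c * of_real x))" for k
  proof (induction k)
    case (Suc k)
    then show ?case
      using dv_exp[of "c ^ k" c] by (auto simp: mult_ac)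
  qed simp
  moreover have "(\<lambda>x. c ^ k * exp (c * of_real x)) differentiable (at x)" for k x
    using differentiableI_vector[OF has_dv_exp] by simp
  ultimately show ?thesis unfolding smooth_fun_def by auto
qed

section \<open>The operators d/dx - c\<close>

lemma shift_op_eq: "shift_op c f = (\<lambda>x. dv f x - c * f x)"
  by (simp add: shift_op_def)

lemma smooth_shift: "smooth_fun f \<Longrightarrow> smooth_fun (shift_op c f)"
  unfolding shift_op_eq by (intro smooth_diff smooth_dv smooth_cmult)

lemma smooth_diff_op: "smooth_fun f \<Longrightarrow> smooth_fun (diff_op lam n f)"
  by (induction n arbitrary: f) (auto intro: smooth_shift)

lemma shift_op_zero: "shift_op c (\<lambda>x. 0) = (\<lambda>x. 0)"
  by (simp add: shift_op_eq)

lemma shift_op_exp: "shift_op c (\<lambda>x. C * exp (c * of_real x)) = (\<lambda>x. 0)"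
  by (simp add: shift_op_eq dv_exp)

lemma first_order_solution:
  assumes g: "\<And>x. g differentiable (at x)" and z: "shift_op c g = (\<lambda>x. 0)"
  shows "g x = g 0 * exp (c * of_real x)"
proof -
  define k where "k = (\<lambda>x. exp (- c * of_real x) * g x)"
  have "(k has_vector_derivative 0) (at x within UNIV)" for x
  proof -
    have "(k has_vector_derivative (exp (- c * of_real x) * dv g x + (- c * exp (- c * of_real x)) * g x)) (at x)"
      unfolding k_def by (intro has_vector_derivative_mult has_dv_exp has_dv g)
    moreover have "dv g x = c * g x" using fun_cong[OF z, of x] by (simp add: shift_op_eq)
    ultimately show ?thesis by (simp add: algebra_simps)
  qed
  then obtain C where C: "\<And>x. k x = C" using has_vector_derivative_zero_constant[of UNIV k] by auto
  have "g x = exp (c * of_real x) * k x"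
    unfolding k_def by (simp add: exp_minus_inverse mult.assoc[symmetric] exp_add[symmetric])
  also have "\<dots> = exp (c * of_real x) * k 0" by (simp add: C)
  finally show ?thesis by (simp add: k_def)
qed

lemma shift_add: "smooth_fun f \<Longrightarrow> smooth_fun g \<Longrightarrow>
   shift_op c (\<lambda>x. f x + g x) = (\<lambda>x. shift_op c f x + shift_op c g x)"
  unfolding shift_op_eq by (auto simp: dv_add smooth_differentiable algebra_simps)

lemma shift_cmult: "smooth_fun f \<Longrightarrow> shift_op c (\<lambda>x. e * f x) = (\<lambda>x. e * shift_op c f x)"
  unfolding shift_op_eq by (auto simp: dv_cmult smooth_differentiable algebra_simps)

lemma shift_cnj: "smooth_fun f \<Longrightarrow> shift_op (cnj c) (\<lambda>x. cnj (f x)) = (\<lambda>x. cnj (shift_op c f x))"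
  unfolding shift_op_eq by (auto simp: vector_derivative_cnj smooth_differentiable)

lemma diff_op_add: "smooth_fun f \<Longrightarrow> smooth_fun g \<Longrightarrow>
   diff_op lam k (\<lambda>x. f x + g x) = (\<lambda>x. diff_op lam k f x + diff_op lam k g x)"
  by (induction k arbitrary: f g) (simp_all add: shift_add smooth_shift)

lemma diff_op_cmult: "smooth_fun f \<Longrightarrow> diff_op lam k (\<lambda>x. e * f x) = (\<lambda>x. e * diff_op lam k f x)"
  by (induction k arbitrary: f) (simp_all add: shift_cmult smooth_shift)

lemma diff_op_cnj: "smooth_fun f \<Longrightarrow>
  diff_op (\<lambda>j. cnj (lam j)) k (\<lambda>x. cnj (f x)) = (\<lambda>x. cnj (diff_op lam k f x))"
  by (induction k arbitrary: f) (simp_all add: shift_cnj smooth_shift)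

lemma diff_op_exp: "diff_op lam k (\<lambda>x. C * exp (mu * of_real x)) =
    (\<lambda>x. (C * (\<Prod>j\<le>k. (mu - lam j))) * exp (mu * of_real x))"
proof (induction k arbitrary: C)
  case 0 then show ?case by (simp add: shift_op_eq dv_exp algebra_simps)
next
  case (Suc k)
  have "shift_op (lam (Suc k)) (\<lambda>x. C * exp (mu * of_real x)) =
      (\<lambda>x. (C * (mu - lam (Suc k))) * exp (mu * of_real x))"
    by (simp add: shift_op_eq dv_exp algebra_simps)
  then have "diff_op lam (Suc k) (\<lambda>x. C * exp (mu * of_real x)) =
      diff_op lam k (\<lambda>x. (C * (mu - lam (Suc k))) * exp (mu * of_real x))" by simp
  also have "\<dots> = (\<lambda>x. (C * (mu - lam (Suc k)) * (\<Prod>j\<le>k. (mu - lam j))) * exp (mu * of_real x))"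
    by (rule Suc.IH)
  finally show ?case by (simp add: prod.atMost_Suc mult_ac)
qed

lemma shift_commute: assumes "smooth_fun f"
  shows "shift_op c (shift_op d f) = shift_op d (shift_op c f)"
proof -
  have f1: "f differentiable (at x)" and f2: "dv f differentiable (at x)" for x
    using assms smooth_differentiable smooth_dv by blast+
  have "dv (\<lambda>x. dv f x - e * f x) x = dv (dv f) x - e * dv f x" for e x
    using f1 f2 by (simp add: dv_diff dv_cmult)
  then show ?thesis unfolding shift_op_eq by (auto simp: algebra_simps)
qed

lemma shift_diff_op_commute:
  "smooth_fun f \<Longrightarrow> shift_op c (diff_op lam k f) = diff_op lam k (shift_op c f)"
proof (induction k arbitrary: f)
  case 0 then show ?case by (simp add: shift_commute)
next
  case (Suc k)
  then show ?case using Suc.IH[OF smooth_shift[OF Suc.prems]] shift_commute[OF Suc.prems] by simp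
qed

lemma diff_op_commute: "smooth_fun f \<Longrightarrow> diff_op A k (diff_op B l f) = diff_op B l (diff_op A k f)"
proof (induction k arbitrary: f)
  case 0 then show ?case by (simp add: shift_diff_op_commute)
next
  case (Suc k)
  then show ?case
    using Suc.IH[OF smooth_shift[OF Suc.prems]] shift_diff_op_commute[OF Suc.prems] by simp
qed

lemma diff_op_cong: "(\<And>j. j \<le> m \<Longrightarrow> A j = B j) \<Longrightarrow> diff_op A m f = diff_op B m f"
  by (induction m arbitrary: f) auto

lemma diff_op_Suc_outer:
  "smooth_fun f \<Longrightarrow> diff_op lam (Suc m) f = shift_op (lam (Suc m)) (diff_op lam m f)"
  by (simp add: shift_diff_op_commute)

definition skip :: "nat \<Rightarrow> (nat \<Rightarrow> complex) \<Rightarrow> nat \<Rightarrow> complex" where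
  "skip k lam j = (if j < k then lam j else lam (Suc j))"

lemma diff_op_skip:
  "k \<le> Suc m \<Longrightarrow> smooth_fun g \<Longrightarrow>
   diff_op lam (Suc m) g = diff_op (skip k lam) m (shift_op (lam k) g)"
proof (induction m arbitrary: k g)
  case 0
  then consider "k = 0" | "k = 1" by linarith
  then show ?case using shift_commute[OF "0.prems"(2)] by cases (simp_all add: skip_def)
next
  case (Suc m)
  show ?case
  proof (cases "k = Suc (Suc m)")
    case True
    have "diff_op lam (Suc m) = diff_op (skip k lam) (Suc m)"
      by (intro ext diff_op_cong) (auto simp: skip_def True)
    then show ?thesis using True by simp
  next
    case False
    then have k: "k \<le> Suc m" using Suc.prems by simp
    have "diff_op lam (Suc (Suc m)) g = diff_op lam (Suc m) (shift_op (lam (Suc (Suc m))) g)" by simp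
    also have "\<dots> = diff_op (skip k lam) m (shift_op (lam k) (shift_op (lam (Suc (Suc m))) g))"
      by (rule Suc.IH[OF k smooth_shift[OF Suc.prems(2)]])
    also have "\<dots> = diff_op (skip k lam) (Suc m) (shift_op (lam k) g)"
      using k shift_commute[OF Suc.prems(2)] by (simp add: skip_def)
    finally show ?thesis .
  qed
qed

lemma shift_shift_eq:
  assumes "smooth_fun f"
  shows "shift_op l2 (shift_op l1 f) x = dv (dv f) x - (l1 + l2) * dv f x + l1 * l2 * f x"
proof -
  have "dv (shift_op l1 f) x = dv (dv f) x - l1 * dv f x"
    unfolding shift_op_eq using assms
    by (simp add: dv_diff dv_cmult smooth_differentiable smooth_dv)
  then show ?thesis by (simp add: shift_op_eq[of l2] shift_op_eq[of l1] algebra_simps)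
qed

lemma second_order_unique:
  assumes sf: "smooth_fun f" and z: "shift_op l2 (shift_op l1 f) = (\<lambda>x. 0)"
    and f0: "f x0 = 0" and d0: "dv f x0 = 0"
  shows "f = (\<lambda>x. 0)"
proof -
  let ?g = "shift_op l1 f"
  have eg: "?g x = ?g 0 * exp (l2 * of_real x)" for x
    by (rule first_order_solution[OF smooth_differentiable[OF smooth_shift[OF sf]] z])
  have "?g x0 = 0" using f0 d0 by (simp add: shift_op_eq)
  then have "?g x = 0" for x using eg[of x0] eg[of x] by simp
  then have "?g = (\<lambda>x. 0)" by (rule ext)
  then have ef: "f x = f 0 * exp (l1 * of_real x)" for x
    by (rule first_order_solution[OF smooth_differentiable[OF sf]])
  have "f x = 0" for x using f0 ef[of x0] ef[of x] by simp
  then show ?thesis by (rule ext)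
qed

section \<open>Counting zeros with multiplicity\<close>

abbreviation vanishes_to_order :: "(real \<Rightarrow> complex) \<Rightarrow> real \<Rightarrow> nat \<Rightarrow> bool" where
  "vanishes_to_order f x m \<equiv> \<forall>i<m. vderiv i f x = 0"

text \<open>f has at most K zeros in A counted with multiplicity (a zero of infinite order
  counts as infinitely many).\<close>
definition at_most_zeros :: "(real \<Rightarrow> complex) \<Rightarrow> real set \<Rightarrow> nat \<Rightarrow> bool" where
  "at_most_zeros f A K \<longleftrightarrow>
     (\<forall>S m. finite S \<and> S \<subseteq> A \<and> (\<forall>x\<in>S. vanishes_to_order f x (m x)) \<longrightarrow> sum m S \<le> K)"

lemma ext_chebyshev_iff:
  "ext_chebyshev E n A \<longleftrightarrow> (\<forall>f\<in>E. f \<noteq> (\<lambda>x. 0) \<longrightarrow> at_most_zeros f A n)"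
  by (simp add: ext_chebyshev_def at_most_zeros_def)

lemma at_most_zeros_mono: "at_most_zeros f A K \<Longrightarrow> K \<le> K' \<Longrightarrow> at_most_zeros f A K'"
  unfolding at_most_zeros_def by (meson le_trans)

lemma at_most_zeros_nonvanishing:
  assumes "\<And>x. x \<in> A \<Longrightarrow> f x \<noteq> 0" shows "at_most_zeros f A 0"
  unfolding at_most_zeros_def
proof (intro allI impI)
  fix S m assume h: "finite S \<and> S \<subseteq> A \<and> (\<forall>x\<in>S. vanishes_to_order f x (m x))"
  have "m x = 0" if "x \<in> S" for x
  proof (rule ccontr)
    assume "m x \<noteq> 0"
    then have "vderiv 0 f x = 0" using h that by blast
    then show False using assms h that by auto
  qed
  then show "sum m S \<le> 0" by simp
qed

text \<open>A nonzero solution of a first-order equation is an exponential, hence zero-free.\<close>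
lemma first_order_no_zeros:
  assumes "\<And>x. f differentiable (at x)" "shift_op c f = (\<lambda>x. 0)" "f \<noteq> (\<lambda>x. 0)"
  shows "at_most_zeros f A 0"
proof -
  have e: "f x = f 0 * exp (c * of_real x)" for x by (rule first_order_solution[OF assms(1,2)])
  have "f 0 \<noteq> 0"
  proof
    assume "f 0 = 0"
    then have "f x = 0" for x using e[of x] by simp
    then have "f = (\<lambda>x. 0)" by (rule ext)
    then show False using assms(3) by simp
  qed
  then have "f x \<noteq> 0" for x using e[of x] by simp
  then show ?thesis by (intro at_most_zeros_nonvanishing)
qed

lemma vanishes_mult:
  "smooth_fun p \<Longrightarrow> smooth_fun \<phi> \<Longrightarrow> vanishes_to_order \<phi> x m \<Longrightarrow>
   vanishes_to_order (\<lambda>y. p y * \<phi> y) x m"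
proof (induction m arbitrary: p \<phi>)
  case 0 then show ?case by simp
next
  case (Suc m)
  show ?case
  proof (intro allI impI)
    fix i assume i: "i < Suc m"
    show "vderiv i (\<lambda>y. p y * \<phi> y) x = 0"
    proof (cases i)
      case 0 then show ?thesis using Suc.prems by auto
    next
      case (Suc i')
      have sd: "smooth_fun (dv p)" "smooth_fun (dv \<phi>)" using Suc.prems smooth_dv by auto
      have "i' < m" using i Suc by simp
      moreover have "vanishes_to_order \<phi> x m" using Suc.prems by auto
      moreover have "vanishes_to_order (dv \<phi>) x m" using Suc.prems by (auto simp flip: vderiv_Suc')
      ultimately show ?thesis unfolding Suc vderiv_Suc_mult[OF Suc.prems(1,2)]
        using Suc.IH[OF sd(1) Suc.prems(2)] Suc.IH[OF Suc.prems(1) sd(2)] by simp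
    qed
  qed
qed

lemma vanishes_mult_cancel:
  "smooth_fun w \<Longrightarrow> smooth_fun h \<Longrightarrow> w x \<noteq> 0 \<Longrightarrow> vanishes_to_order (\<lambda>y. w y * h y) x m \<Longrightarrow>
   vanishes_to_order h x m"
proof (induction m arbitrary: h)
  case 0 then show ?case by simp
next
  case (Suc m)
  have sw: "smooth_fun (dv w)" and sh: "smooth_fun (dv h)" using Suc.prems smooth_dv by auto
  have hm: "vanishes_to_order h x m" using Suc.IH[OF Suc.prems(1,2,3)] Suc.prems(4) by simp
  have eq: "vderiv (Suc i) (\<lambda>y. w y * h y) x =
      vderiv i (\<lambda>y. dv w y * h y) x + vderiv i (\<lambda>y. w y * dv h y) x" for i
    unfolding vderiv_Suc_mult[OF Suc.prems(1,2)] by (rule refl)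
  have dwh: "vanishes_to_order (\<lambda>y. dv w y * h y) x m" by (rule vanishes_mult[OF sw Suc.prems(2) hm])
  have "vanishes_to_order (\<lambda>y. w y * dv h y) x m"
  proof (intro allI impI)
    fix i assume "i < m"
    then have "vderiv (Suc i) (\<lambda>y. w y * h y) x = 0" "vderiv i (\<lambda>y. dv w y * h y) x = 0"
      using Suc.prems(4) dwh Suc_mono by blast+
    then show "vderiv i (\<lambda>y. w y * dv h y) x = 0" using eq[of i] by simp
  qed
  then have dh: "vanishes_to_order (dv h) x m" by (rule Suc.IH[OF Suc.prems(1) sh Suc.prems(3)])
  have "vderiv 0 (\<lambda>y. w y * h y) x = 0" using Suc.prems(4) by blast
  then have "h x = 0" using Suc.prems(3) by simp
  show ?case
  proof (intro allI impI)
    fix i assume "i < Suc m"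
    show "vderiv i h x = 0"
    proof (cases i)
      case 0 then show ?thesis using \<open>h x = 0\<close> by simp
    next
      case (Suc j)
      then have "vderiv j (dv h) x = 0" using dh \<open>i < Suc m\<close> by simp
      then show ?thesis by (simp only: Suc vderiv_Suc')
    qed
  qed
qed

lemma at_most_zeros_mult:
  assumes "smooth_fun w" "smooth_fun h" "\<And>x. x \<in> A \<Longrightarrow> w x \<noteq> 0" "at_most_zeros h A K"
  shows "at_most_zeros (\<lambda>x. w x * h x) A K"
  unfolding at_most_zeros_def
proof (intro allI impI)
  fix S m
  assume S: "finite S \<and> S \<subseteq> A \<and> (\<forall>x\<in>S. vanishes_to_order (\<lambda>x. w x * h x) x (m x))"
  then have "\<forall>x\<in>S. vanishes_to_order h x (m x)"
    using vanishes_mult_cancel[OF assms(1,2)] assms(3) by blast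
  then show "sum m S \<le> K" using assms(4) S unfolding at_most_zeros_def by blast
qed

section \<open>Real-valued functions and Rolle's theorem for the Wronskian\<close>

definition real_valued :: "(real \<Rightarrow> complex) \<Rightarrow> bool" where
  "real_valued f \<longleftrightarrow> (\<forall>x. Im (f x) = 0)"

lemma real_valued_iff_cnj: "real_valued f \<longleftrightarrow> (\<lambda>x. cnj (f x)) = f"
  unfolding real_valued_def by (auto simp: fun_eq_iff complex_eq_iff)

lemma real_valued_dv:
  assumes "real_valued f" "\<And>x. f differentiable (at x)" shows "real_valued (dv f)"
proof -
  have "dv f x = cnj (dv f x)" for x
    using vector_derivative_cnj[OF assms(2), of x] assms(1) by (simp add: real_valued_iff_cnj)
  then show ?thesis unfolding real_valued_def by (metis cnj.sel(2) equation_minus_iff neg_equal_zero)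
qed

text \<open>The Wronskian of a weight w and a function phi; where w does not vanish it equals
  w^2 (phi / w)', so Rolle's theorem for phi / w produces its zeros.\<close>
definition wronskian :: "(real \<Rightarrow> complex) \<Rightarrow> (real \<Rightarrow> complex) \<Rightarrow> real \<Rightarrow> complex" where
  "wronskian w \<phi> = (\<lambda>x. w x * dv \<phi> x - dv w x * \<phi> x)"

lemma smooth_wronskian: "smooth_fun w \<Longrightarrow> smooth_fun \<phi> \<Longrightarrow> smooth_fun (wronskian w \<phi>)"
  unfolding wronskian_def by (intro smooth_diff smooth_mult smooth_dv)

lemma real_valued_wronskian:
  "smooth_fun w \<Longrightarrow> smooth_fun \<phi> \<Longrightarrow> real_valued w \<Longrightarrow> real_valued \<phi> \<Longrightarrow> real_valued (wronskian w \<phi>)"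
  using real_valued_dv[of w] real_valued_dv[of \<phi>] smooth_differentiable[of w] smooth_differentiable[of \<phi>]
  unfolding wronskian_def real_valued_def by simp

lemma dv_wronskian:
  assumes "smooth_fun w" "smooth_fun \<phi>"
  shows "dv (wronskian w \<phi>) x = w x * dv (dv \<phi>) x - dv (dv w) x * \<phi> x"
  unfolding wronskian_def using assms smooth_dv[OF assms(1)] smooth_dv[OF assms(2)]
  by (simp add: dv_diff dv_mult smooth_differentiable algebra_simps)

lemma wronskian_rolle:
  assumes sp: "smooth_fun \<phi>" and sw: "smooth_fun w" and rp: "real_valued \<phi>" and rw: "real_valued w"
    and pos: "\<And>x. x \<in> {x1..x2} \<Longrightarrow> Re (w x) > 0"
    and x12: "x1 < x2" and z1: "\<phi> x1 = 0" and z2: "\<phi> x2 = 0"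
  shows "\<exists>\<xi>. x1 < \<xi> \<and> \<xi> < x2 \<and> wronskian w \<phi> \<xi> = 0"
proof -
  txt \<open>Rolle's theorem for the quotient phi / w, whose derivative is the Wronskian over w^2.\<close>
  define g where "g = (\<lambda>x. Re (\<phi> x) / Re (w x))"
  define G where "G = (\<lambda>x. (Re (dv \<phi> x) * Re (w x) - Re (\<phi> x) * Re (dv w x)) / (Re (w x) * Re (w x)))"
  have dg: "(g has_real_derivative G x) (at x)" if "x \<in> {x1..x2}" for x
  proof -
    have "((\<lambda>x. Re (\<phi> x)) has_real_derivative Re (dv \<phi> x)) (at x)"
      by (intro has_field_derivative_Re has_dv smooth_differentiable sp)
    moreover have "((\<lambda>x. Re (w x)) has_real_derivative Re (dv w x)) (at x)"
      by (intro has_field_derivative_Re has_dv smooth_differentiable sw)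
    ultimately show ?thesis unfolding g_def G_def
      using pos[OF that] has_dv[OF smooth_differentiable[OF sp]] has_dv[OF smooth_differentiable[OF sw]]
      by (auto intro!: derivative_eq_intros simp: power2_eq_square)
  qed
  have "continuous_on {x1..x2} g"
    using dg by (meson DERIV_continuous continuous_at_imp_continuous_on)
  moreover have "\<And>x. x1 < x \<Longrightarrow> x < x2 \<Longrightarrow> (g has_derivative (\<lambda>h. G x * h)) (at x)"
    using dg by (auto simp: has_field_derivative_def)
  moreover have "g x1 = g x2" using z1 z2 by (simp add: g_def)
  ultimately obtain z where z: "x1 < z" "z < x2" "(\<lambda>h. G z * h) = (\<lambda>v. 0)"
    using Rolle_deriv[OF x12, of g "\<lambda>x h. G x * h"] by blast
  then have "G z = 0" by (metis mult_1_right)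
  moreover have "Re (w z) > 0" using pos z by auto
  ultimately have re0: "Re (dv \<phi> z) * Re (w z) - Re (\<phi> z) * Re (dv w z) = 0"
    by (simp add: G_def)
  have "real_valued (dv \<phi>)" "real_valued (dv w)"
    using real_valued_dv rp rw sp sw smooth_differentiable by blast+
  then have "wronskian w \<phi> z = 0"
    using re0 rp rw unfolding real_valued_def wronskian_def by (simp add: complex_eq_iff algebra_simps)
  then show ?thesis using z by blast
qed

lemma wronskian_vanishes:
  assumes sp: "smooth_fun \<phi>" and sw: "smooth_fun w" and z: "vanishes_to_order \<phi> x (Suc k)"
  shows "vanishes_to_order (wronskian w \<phi>) x k"
proof -
  have s1: "smooth_fun (\<lambda>x. w x * dv \<phi> x)" "smooth_fun (\<lambda>x. dv w x * \<phi> x)"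
    using sp sw by (auto intro: smooth_mult smooth_dv)
  have a: "vanishes_to_order (\<lambda>x. w x * dv \<phi> x) x k"
    by (rule vanishes_mult[OF sw smooth_dv[OF sp]]) (use z in \<open>auto simp flip: vderiv_Suc'\<close>)
  have b: "vanishes_to_order (\<lambda>x. dv w x * \<phi> x) x k"
    by (rule vanishes_mult[OF smooth_dv[OF sw] sp]) (use z in auto)
  show ?thesis using a b by (simp add: wronskian_def vderiv_diff[OF s1])
qed

text \<open>Counting argument: if phi has zeros of orders m x > 0 at the points of A, then the
  Wronskian has zeros of total order at least sum m A - 1 in [a, Max A] -- order m x - 1 at
  each point of A and one more strictly between any two consecutive points.\<close>
lemma wronskian_zeros_below:
  assumes sp: "smooth_fun \<phi>" and sw: "smooth_fun w" and rp: "real_valued \<phi>" and rw: "real_valued w"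
    and pos: "\<And>x. x \<in> {a..b} \<Longrightarrow> Re (w x) > 0"
    and "finite A" "A \<noteq> {}" "A \<subseteq> {a..b}" "\<forall>x\<in>A. 0 < m x \<and> vanishes_to_order \<phi> x (m x)"
  shows "\<exists>S' m'. finite S' \<and> S' \<subseteq> {a..Max A} \<and>
     (\<forall>x\<in>S'. vanishes_to_order (wronskian w \<phi>) x (m' x)) \<and> sum m A \<le> sum m' S' + 1"
  using assms(6-9)
proof (induction A rule: finite_linorder_max_induct)
  case empty then show ?case by simp
next
  case (insert s A)
  have ms: "0 < m s" and zs: "vanishes_to_order \<phi> s (Suc (m s - 1))" using insert.prems by auto
  have ws: "vanishes_to_order (wronskian w \<phi>) s (m s - 1)" by (rule wronskian_vanishes[OF sp sw zs])
  have Max_s: "Max (insert s A) = s" using insert.hyps by (intro Max_eqI) auto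
  have sab: "a \<le> s" "s \<le> b" using insert.prems by auto
  show ?case
  proof (cases "A = {}")
    case True
    then show ?thesis using ws ms Max_s sab
      by (intro exI[of _ "{s}"] exI[of _ "\<lambda>_. m s - 1"]) auto
  next
    case False
    obtain S' m' where S': "finite S'" "S' \<subseteq> {a..Max A}"
      "\<forall>x\<in>S'. vanishes_to_order (wronskian w \<phi>) x (m' x)" "sum m A \<le> sum m' S' + 1"
      using insert.IH[OF False] insert.prems by blast
    define t where "t = Max A"
    have tA: "t \<in> A" using False insert.hyps(1) t_def by simp
    have ts: "t < s" using insert.hyps tA by auto
    have ta: "a \<le> t" using insert.prems tA by auto
    have "\<phi> t = 0" "\<phi> s = 0" using insert.prems tA by (metis insertCI vderiv.simps(1))+
    then obtain \<xi> where xi: "t < \<xi>" "\<xi> < s" "wronskian w \<phi> \<xi> = 0"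
      using wronskian_rolle[OF sp sw rp rw _ ts] pos ta sab by auto
    have xS: "\<xi> \<notin> S'" "s \<notin> S'" using S'(2) xi ts t_def by auto
    define m'' where "m'' = (\<lambda>x. if x = s then m s - 1 else if x = \<xi> then 1 else m' x)"
    have "sum m'' (insert s (insert \<xi> S')) = (m s - 1) + (1 + sum m'' S')"
      using xS xi S'(1) by (simp add: m''_def)
    also have "sum m'' S' = sum m' S'"
      using xS by (intro sum.cong) (auto simp: m''_def)
    finally have "sum m'' (insert s (insert \<xi> S')) = m s + sum m' S'" using ms by simp
    moreover have "sum m (insert s A) = m s + sum m A" using insert.hyps by auto
    moreover have "\<forall>x\<in>insert s (insert \<xi> S'). vanishes_to_order (wronskian w \<phi>) x (m'' x)"
      using ws xi S'(3) xS by (auto simp: m''_def)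
    moreover have "insert s (insert \<xi> S') \<subseteq> {a..Max (insert s A)}"
      using Max_s S'(2) xi ta ts t_def by auto
    ultimately show ?thesis using S'(1,4)
      by (intro exI[of _ "insert s (insert \<xi> S')"] exI[of _ m'']) auto
  qed
qed

lemma at_most_zeros_wronskian:
  assumes sp: "smooth_fun \<phi>" and sw: "smooth_fun w" and rp: "real_valued \<phi>" and rw: "real_valued w"
    and pos: "\<And>x. x \<in> {a..b} \<Longrightarrow> Re (w x) > 0"
    and Z: "at_most_zeros (wronskian w \<phi>) {a..b} K"
  shows "at_most_zeros \<phi> {a..b} (Suc K)"
  unfolding at_most_zeros_def
proof (intro allI impI)
  fix S m assume S: "finite S \<and> S \<subseteq> {a..b} \<and> (\<forall>x\<in>S. vanishes_to_order \<phi> x (m x))"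
  define S0 where "S0 = {x\<in>S. 0 < m x}"
  have "sum m S = sum m S0"
    unfolding S0_def using S by (intro sum.mono_neutral_right) auto
  moreover have "sum m S0 \<le> Suc K"
  proof (cases "S0 = {}")
    case False
    have S0: "finite S0" "S0 \<subseteq> {a..b}" "\<forall>x\<in>S0. 0 < m x \<and> vanishes_to_order \<phi> x (m x)"
      using S S0_def by auto
    obtain S' m' where S': "finite S'" "S' \<subseteq> {a..Max S0}"
        "\<forall>x\<in>S'. vanishes_to_order (wronskian w \<phi>) x (m' x)" "sum m S0 \<le> sum m' S' + 1"
      using wronskian_zeros_below[OF sp sw rp rw pos S0(1) False S0(2,3)] by blast
    have "Max S0 \<le> b" using False S0 by (meson Max_in atLeastAtMost_iff subsetD)
    then have "S' \<subseteq> {a..b}" using S'(2) by auto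
    then have "sum m' S' \<le> K" using Z S'(1,3) unfolding at_most_zeros_def by blast
    then show ?thesis using S'(4) by simp
  qed simp
  ultimately show "sum m S \<le> Suc K" by simp
qed

section \<open>Removing one factor of the operator\<close>

subsection \<open>A real factor\<close>

lemma wronskian_first_order:
  assumes "shift_op c w = (\<lambda>x. 0)"
  shows "wronskian w f = (\<lambda>x. w x * shift_op c f x)"
proof
  fix x
  have "dv w x = c * w x" using fun_cong[OF assms, of x] by (simp add: shift_op_eq)
  then show "wronskian w f x = w x * shift_op c f x"
    by (simp add: wronskian_def shift_op_eq algebra_simps)
qed

lemma real_factor_step:
  assumes sf: "smooth_fun f" and rf: "real_valued f" and c: "Im c = 0"
    and Z: "at_most_zeros (shift_op c f) {a..b} K"
  shows "at_most_zeros f {a..b} (Suc K)"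
proof -
  define w where "w = (\<lambda>x. exp (c * of_real x))"
  have sw: "smooth_fun w" unfolding w_def by (rule smooth_exp)
  have rw: "real_valued w" unfolding w_def real_valued_def using c by (simp add: Im_exp)
  have pos: "Re (w x) > 0" for x unfolding w_def using c by (simp add: Re_exp)
  have "shift_op c w = (\<lambda>x. 0)" using shift_op_exp[of c 1] by (simp add: w_def)
  then have "wronskian w f = (\<lambda>x. w x * shift_op c f x)" by (rule wronskian_first_order)
  moreover have "at_most_zeros (\<lambda>x. w x * shift_op c f x) {a..b} K"
    by (intro at_most_zeros_mult sw smooth_shift sf Z) (simp add: w_def)
  ultimately show ?thesis by (intro at_most_zeros_wronskian[OF sf sw rf rw]) (simp_all add: pos)
qed

lemma real_valued_shift: "smooth_fun f \<Longrightarrow> real_valued f \<Longrightarrow> Im c = 0 \<Longrightarrow> real_valued (shift_op c f)"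
  using real_valued_dv[of f] smooth_differentiable[of f] unfolding real_valued_def shift_op_eq by auto

subsection \<open>A pair of conjugate factors\<close>

lemma wronskian_second_order:
  assumes sw: "smooth_fun w" and sf: "smooth_fun f" and kw: "shift_op l2 (shift_op l1 w) = (\<lambda>x. 0)"
  shows "shift_op (l1 + l2) (wronskian w f) = (\<lambda>x. w x * shift_op l2 (shift_op l1 f) x)"
proof
  fix x
  have ddw: "dv (dv w) x = (l1 + l2) * dv w x - l1 * l2 * w x"
    using fun_cong[OF kw, of x] shift_shift_eq[OF sw] by (simp add: algebra_simps)
  have "shift_op (l1 + l2) (wronskian w f) x = dv (wronskian w f) x - (l1 + l2) * wronskian w f x"
    by (simp add: shift_op_eq)
  also have "\<dots> = w x * dv (dv f) x - dv (dv w) x * f x - (l1 + l2) * (w x * dv f x - dv w x * f x)"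
    unfolding dv_wronskian[OF sw sf] by (simp add: wronskian_def)
  also have "\<dots> = w x * shift_op l2 (shift_op l1 f) x"
    by (simp add: ddw shift_shift_eq[OF sf] algebra_simps)
  finally show "shift_op (l1 + l2) (wronskian w f) x = w x * shift_op l2 (shift_op l1 f) x" .
qed

text \<open>The weight for a conjugate pair l, cnj l: the real part of e^{l (x - c)} with c the
  midpoint of [a, b].  It is positive on [a, b]: this is where the hypothesis |Im l| (b - a) < pi
  enters.\<close>
lemma cosine_weight:
  assumes ab: "a \<le> b" and len: "\<bar>Im l\<bar> * (b - a) < pi"
  obtains w where "smooth_fun w" "real_valued w" "\<And>x. x \<in> {a..b} \<Longrightarrow> Re (w x) > 0"
    "shift_op (cnj l) (shift_op l w) = (\<lambda>x. 0)"
proof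
  define c where "c = (a + b) / 2"
  define E where "E = (\<lambda>x. exp (- l * of_real c) / 2 * exp (l * of_real x))"
  define w where "w = (\<lambda>x. E x + cnj (E x))"
  have sE: "smooth_fun E" unfolding E_def by (intro smooth_cmult smooth_exp)
  show "smooth_fun w" unfolding w_def by (intro smooth_add smooth_cnj sE)
  show "real_valued w" unfolding real_valued_def w_def by simp
  show "Re (w x) > 0" if "x \<in> {a..b}" for x
  proof -
    have Ex: "E x = exp (l * of_real (x - c)) / 2"
      unfolding E_def by (simp add: exp_add[symmetric] algebra_simps)
    have "Re (w x) = 2 * Re (E x)" by (simp add: w_def)
    also have "\<dots> = Re (exp (l * of_real (x - c)))" unfolding Ex by simp
    also have "\<dots> = exp (Re l * (x - c)) * cos (Im l * (x - c))"
      using Re_exp[of "l * of_real (x - c)"] by simp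
    finally have "Re (w x) = exp (Re l * (x - c)) * cos (Im l * (x - c))" .
    moreover have "\<bar>Im l * (x - c)\<bar> < pi / 2"
    proof -
      have "- ((b - a) / 2) \<le> x - c" "x - c \<le> (b - a) / 2"
        using that unfolding c_def atLeastAtMost_iff by (simp_all add: field_simps)
      then have "\<bar>x - c\<bar> \<le> (b - a) / 2" by (intro abs_leI) linarith+
      then have "\<bar>Im l * (x - c)\<bar> \<le> \<bar>Im l\<bar> * ((b - a) / 2)"
        unfolding abs_mult by (intro mult_left_mono) simp_all
      then show ?thesis using len by simp
    qed
    then have "cos (Im l * (x - c)) > 0" by (intro cos_gt_zero_pi) auto
    ultimately show ?thesis by simp
  qed
  have kE: "shift_op l E = (\<lambda>x. 0)" unfolding E_def by (rule shift_op_exp)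
  have kcE: "shift_op (cnj l) (\<lambda>x. cnj (E x)) = (\<lambda>x. 0)" by (simp add: shift_cnj[OF sE] kE)
  have "shift_op (cnj l) (shift_op l w) = shift_op (cnj l) (shift_op l (\<lambda>x. cnj (E x)))"
    unfolding w_def shift_add[OF sE smooth_cnj[OF sE]] kE by simp
  also have "\<dots> = shift_op l (shift_op (cnj l) (\<lambda>x. cnj (E x)))"
    by (rule shift_commute[OF smooth_cnj[OF sE]])
  finally show "shift_op (cnj l) (shift_op l w) = (\<lambda>x. 0)" by (simp add: kcE shift_op_zero)
qed

text \<open>A conjugate pair of factors maps real-valued functions to real-valued ones, since
  (d/dx - cnj l)(d/dx - l) = D^2 - 2 Re l D + |l|^2.\<close>
lemma real_valued_shift_pair:
  assumes sf: "smooth_fun f" and rf: "real_valued f"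
  shows "real_valued (shift_op (cnj l) (shift_op l f))"
proof -
  have "real_valued (dv f)" using real_valued_dv[OF rf] smooth_differentiable[OF sf] by blast
  moreover have "real_valued (dv (dv f))"
    using real_valued_dv[OF calculation] smooth_differentiable[OF smooth_dv[OF sf]] by blast
  ultimately show ?thesis
    using rf unfolding real_valued_def shift_shift_eq[OF sf] by simp
qed

text \<open>Two applications of Rolle: to f with the cosine weight, then to the Wronskian u
  (which satisfies u' - 2 Re l u = w (d/dx - cnj l)(d/dx - l) f) with an exponential weight.\<close>
lemma pair_step:
  assumes sf: "smooth_fun f" and rf: "real_valued f"
    and ab: "a \<le> b" and len: "\<bar>Im l\<bar> * (b - a) < pi"
    and Z: "at_most_zeros (shift_op (cnj l) (shift_op l f)) {a..b} K"
  shows "at_most_zeros f {a..b} (Suc (Suc K))"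
proof -
  obtain w where sw: "smooth_fun w" and rw: "real_valued w"
    and pos: "\<And>x. x \<in> {a..b} \<Longrightarrow> Re (w x) > 0" and kw: "shift_op (cnj l) (shift_op l w) = (\<lambda>x. 0)"
    using cosine_weight[OF ab len] by blast
  have "at_most_zeros (\<lambda>x. w x * shift_op (cnj l) (shift_op l f) x) {a..b} K"
    using pos by (intro at_most_zeros_mult sw smooth_shift sf Z) force
  then have Zu: "at_most_zeros (shift_op (l + cnj l) (wronskian w f)) {a..b} K"
    by (simp only: wronskian_second_order[OF sw sf kw])
  have "at_most_zeros (wronskian w f) {a..b} (Suc K)"
    by (rule real_factor_step[OF smooth_wronskian[OF sw sf] real_valued_wronskian[OF sw sf rw rf] _ Zu])
      simp
  then show ?thesis using at_most_zeros_wronskian[OF sf sw rf rw pos] by simp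
qed

lemma pair_kernel_step:
  assumes sf: "smooth_fun f" and rf: "real_valued f" and nf: "f \<noteq> (\<lambda>x. 0)"
    and ab: "a \<le> b" and len: "\<bar>Im l\<bar> * (b - a) < pi"
    and kf: "shift_op (cnj l) (shift_op l f) = (\<lambda>x. 0)"
  shows "at_most_zeros f {a..b} 1"
proof -
  obtain w where sw: "smooth_fun w" and rw: "real_valued w"
    and pos: "\<And>x. x \<in> {a..b} \<Longrightarrow> Re (w x) > 0" and kw: "shift_op (cnj l) (shift_op l w) = (\<lambda>x. 0)"
    using cosine_weight[OF ab len] by blast
  have ku: "shift_op (l + cnj l) (wronskian w f) = (\<lambda>x. 0)"
    using wronskian_second_order[OF sw sf kw] kf by simp
  show ?thesis
  proof (cases "wronskian w f = (\<lambda>x. 0)")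
    case False
    have "at_most_zeros (wronskian w f) {a..b} 0"
      by (rule first_order_no_zeros[OF _ ku False]) (intro smooth_differentiable smooth_wronskian sw sf)
    then show ?thesis using at_most_zeros_wronskian[OF sf sw rf rw pos] by simp
  next
    case True
    have "f x \<noteq> 0" if x: "x \<in> {a..b}" for x
    proof
      assume fx: "f x = 0"
      then have "w x * dv f x = 0" using fun_cong[OF True, of x] by (simp add: wronskian_def)
      then have "dv f x = 0" using pos[OF x] by auto
      then show False using second_order_unique[OF sf kf fx] nf by blast
    qed
    then show ?thesis by (intro at_most_zeros_mono[OF at_most_zeros_nonvanishing]) auto
  qed
qed

subsection \<open>A non-real factor without its conjugate\<close>

lemma exp_cnj_independent:
  assumes K: "\<And>x. K * exp (l * of_real x) = cnj K * exp (cnj l * of_real x)" and l: "Im l \<noteq> 0"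
  shows "K = 0"
proof -
  have K2: "K * exp ((l - cnj l) * of_real x) = cnj K" for x
  proof -
    have "K * exp ((l - cnj l) * of_real x) = K * exp (l * of_real x) / exp (cnj l * of_real x)"
      by (simp add: left_diff_distrib exp_diff)
    also have "\<dots> = cnj K" unfolding K by simp
    finally show ?thesis .
  qed
  have "(l - cnj l) * of_real (pi / (2 * Im l)) = \<i> * of_real pi"
    unfolding complex_diff_cnj using l by (simp add: field_simps)
  then have "- K = cnj K" using K2[of "pi / (2 * Im l)"] by simp
  moreover have "K = cnj K" using K2[of 0] by simp
  ultimately show ?thesis by simp
qed

text \<open>Indeed u = (d/dx - lam_0)...(d/dx - lam_m) f is a multiple u_0 e^{lx}, and since f is real,
  cnj u is the conjugated operator applied to f.  As the factors commute, the conjugated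
  operator applied to u and the operator applied to cnj u agree; this reads
  u_0 P e^{lx} = cnj (u_0 P) e^{cnj l x} with P = prod_j (l - cnj lam_j) nonzero, and the
  independence of the two exponentials forces u_0 = 0.\<close>
lemma unpaired_factor_redundant:
  assumes sf: "smooth_fun f" and rf: "real_valued f" and z: "diff_op lam (Suc m) f = (\<lambda>x. 0)"
    and nr: "Im (lam (Suc m)) \<noteq> 0" and nc: "\<And>k. k \<le> m \<Longrightarrow> lam k \<noteq> cnj (lam (Suc m))"
  shows "diff_op lam m f = (\<lambda>x. 0)"
proof -
  define l where "l = lam (Suc m)"
  define u where "u = diff_op lam m f"
  define lamc where "lamc = (\<lambda>j. cnj (lam j))"
  define P where "P = (\<Prod>j\<le>m. (l - lamc j))"
  have su: "smooth_fun u" unfolding u_def by (rule smooth_diff_op[OF sf])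
  have "shift_op l u = (\<lambda>x. 0)" unfolding l_def u_def using diff_op_Suc_outer[OF sf] z by simp
  then have eu: "u x = u 0 * exp (l * of_real x)" for x
    by (rule first_order_solution[OF smooth_differentiable[OF su]])
  then have ue: "u = (\<lambda>x. u 0 * exp (l * of_real x))" by (rule ext)
  have "diff_op lamc m f = diff_op lamc m (\<lambda>x. cnj (f x))" using rf by (simp add: real_valued_iff_cnj)
  also have "\<dots> = (\<lambda>x. cnj (u x))" unfolding lamc_def u_def by (rule diff_op_cnj[OF sf])
  also have "\<dots> = (\<lambda>x. cnj (u 0) * exp (cnj l * of_real x))"
    by (rule ext) (subst eu, simp add: exp_cnj)
  finally have ve: "diff_op lamc m f = (\<lambda>x. cnj (u 0) * exp (cnj l * of_real x))" .
  have "(u 0 * P) * exp (l * of_real x) = cnj (u 0 * P) * exp (cnj l * of_real x)" for x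
  proof -
    have "(u 0 * P) * exp (l * of_real x) = diff_op lamc m u x"
      unfolding P_def by (subst ue) (simp add: diff_op_exp)
    also have "\<dots> = diff_op lam m (diff_op lamc m f) x"
      unfolding u_def by (simp add: diff_op_commute[OF sf])
    also have "\<dots> = cnj (u 0 * P) * exp (cnj l * of_real x)"
      unfolding ve diff_op_exp by (simp add: P_def lamc_def cnj_prod)
    finally show ?thesis .
  qed
  then have "u 0 * P = 0" by (rule exp_cnj_independent) (simp add: l_def nr)
  moreover have "P \<noteq> 0"
  proof
    assume "P = 0"
    then obtain j where "j \<le> m" "l = cnj (lam j)" unfolding P_def lamc_def by (auto simp: prod_zero_iff)
    then show False using nc[of j] unfolding l_def by auto
  qed
  ultimately have "u 0 = 0" by simp
  then show ?thesis using ue unfolding u_def by simp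
qed

section \<open>Zeros of real-valued solutions\<close>

lemma real_factor_case:
  assumes IH: "\<And>g. g \<in> E_space lam m \<Longrightarrow> real_valued g \<Longrightarrow> g \<noteq> (\<lambda>x. 0) \<Longrightarrow> at_most_zeros g {a..b} m"
    and fE: "f \<in> E_space lam (Suc m)" and rf: "real_valued f" and nf: "f \<noteq> (\<lambda>x. 0)"
    and real: "Im (lam (Suc m)) = 0"
  shows "at_most_zeros f {a..b} (Suc m)"
proof -
  have sf: "smooth_fun f" and z: "diff_op lam (Suc m) f = (\<lambda>x. 0)" using fE by (auto simp: E_space_def)
  define h where "h = shift_op (lam (Suc m)) f"
  show ?thesis
  proof (cases "h = (\<lambda>x. 0)")
    case True
    then show ?thesis unfolding h_def
      by (intro at_most_zeros_mono[OF first_order_no_zeros[OF smooth_differentiable[OF sf] _ nf]]) auto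
  next
    case False
    have "h \<in> E_space lam m" using sf z by (simp add: E_space_def h_def smooth_shift)
    then have "at_most_zeros h {a..b} m"
      using IH False real_valued_shift[OF sf rf real] by (simp add: h_def)
    then show ?thesis unfolding h_def by (rule real_factor_step[OF sf rf real])
  qed
qed

lemma paired_factor_case:
  assumes ab: "a \<le> b" and width: "\<bar>Im (lam (Suc m))\<bar> * (b - a) < pi"
    and IH: "\<And>m' g. m = Suc m' \<Longrightarrow> g \<in> E_space (skip k lam) m' \<Longrightarrow> real_valued g \<Longrightarrow>
      g \<noteq> (\<lambda>x. 0) \<Longrightarrow> at_most_zeros g {a..b} m'"
    and fE: "f \<in> E_space lam (Suc m)" and rf: "real_valued f" and nf: "f \<noteq> (\<lambda>x. 0)"
    and k: "k \<le> m" "lam k = cnj (lam (Suc m))"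
  shows "at_most_zeros f {a..b} (Suc m)"
proof -
  have sf: "smooth_fun f" and z: "diff_op lam (Suc m) f = (\<lambda>x. 0)" using fE by (auto simp: E_space_def)
  define h where "h = shift_op (cnj (lam (Suc m))) (shift_op (lam (Suc m)) f)"
  show ?thesis
  proof (cases "h = (\<lambda>x. 0)")
    case True
    then have "at_most_zeros f {a..b} 1" unfolding h_def by (rule pair_kernel_step[OF sf rf nf ab width])
    then show ?thesis by (rule at_most_zeros_mono) simp
  next
    case False
    txt \<open>For m = 0 the pair is the whole operator, so h would vanish.\<close>
    obtain m' where m: "m = Suc m'"
      using k z False by (cases m) (auto simp: h_def)
    have "diff_op (skip k lam) m' h = diff_op lam (Suc m) f"
      using diff_op_skip[where k=k and m=m' and lam=lam] k smooth_shift[OF sf] by (simp add: h_def m)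
    then have "h \<in> E_space (skip k lam) m'"
      using z sf by (simp add: E_space_def h_def smooth_shift)
    then have "at_most_zeros h {a..b} m'"
      using IH[OF m] False real_valued_shift_pair[OF sf rf] by (simp add: h_def)
    then show ?thesis using pair_step[OF sf rf ab width] by (simp add: h_def m)
  qed
qed

text \<open>Induction on the order, removing the top factor in one of three ways.  The width
  condition is inherited by every subsequence of the coefficients.\<close>
theorem real_solution_zero_bound:
  assumes ab: "a \<le> b"
  shows "\<forall>j\<le>n. \<bar>Im (lam j)\<bar> * (b - a) < pi \<Longrightarrow> f \<in> E_space lam n \<Longrightarrow> real_valued f \<Longrightarrow>
    f \<noteq> (\<lambda>x. 0) \<Longrightarrow> at_most_zeros f {a..b} n"
proof (induction n arbitrary: lam f rule: less_induct)
  case (less n)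
  note len = less.prems(1) and fE = less.prems(2) and rf = less.prems(3) and nf = less.prems(4)
  have sf: "smooth_fun f" and z: "diff_op lam n f = (\<lambda>x. 0)" using fE by (auto simp: E_space_def)
  show ?case
  proof (cases n)
    case 0
    then show ?thesis using first_order_no_zeros[OF smooth_differentiable[OF sf] _ nf] z by simp
  next
    case (Suc m)
    consider (real) "Im (lam n) = 0"
      | (paired) k where "k \<le> m" "lam k = cnj (lam n)"
      | (unpaired) "Im (lam n) \<noteq> 0" "\<And>k. k \<le> m \<Longrightarrow> lam k \<noteq> cnj (lam n)"
      by blast
    then show ?thesis
    proof cases
      case real
      then show ?thesis using real_factor_case[of lam m a b f] less.IH[of m lam] len fE rf nf Suc by simp
    next
      case (paired k)
      show ?thesis unfolding Suc
      proof (rule paired_factor_case[OF ab _ _ _ rf nf paired[unfolded Suc]])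
        show "\<bar>Im (lam (Suc m))\<bar> * (b - a) < pi" using len Suc by simp
        show "f \<in> E_space lam (Suc m)" using fE Suc by simp
        fix m' g assume m: "m = Suc m'" and g: "g \<in> E_space (skip k lam) m'" "real_valued g" "g \<noteq> (\<lambda>x. 0)"
        have "\<forall>j\<le>m'. \<bar>Im (skip k lam j)\<bar> * (b - a) < pi" using len Suc m by (auto simp: skip_def)
        then show "at_most_zeros g {a..b} m'" using less.IH[of m' "skip k lam" g] g Suc m by simp
      qed
    next
      case unpaired
      then have "diff_op lam m f = (\<lambda>x. 0)"
        using unpaired_factor_redundant[OF sf rf, of lam m] z Suc by simp
      then have "at_most_zeros f {a..b} m"
        using less.IH[of m lam f] Suc len sf rf nf by (simp add: E_space_def)
      then show ?thesis by (rule at_most_zeros_mono) (simp add: Suc)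
    qed
  qed
qed

section \<open>Reduction to real-valued solutions\<close>

lemma E_space_lincomb:
  "f \<in> E_space lam n \<Longrightarrow> g \<in> E_space lam n \<Longrightarrow> (\<lambda>x. c * f x + d * g x) \<in> E_space lam n"
proof -
  assume "f \<in> E_space lam n" "g \<in> E_space lam n"
  then have sf: "smooth_fun f" and sg: "smooth_fun g"
    and zf: "diff_op lam n f = (\<lambda>x. 0)" and zg: "diff_op lam n g = (\<lambda>x. 0)"
    by (auto simp: E_space_def)
  have "diff_op lam n (\<lambda>x. c * f x + d * g x) = (\<lambda>x. c * diff_op lam n f x + d * diff_op lam n g x)"
    unfolding diff_op_add[OF smooth_cmult[OF sf] smooth_cmult[OF sg]] diff_op_cmult[OF sf]
      diff_op_cmult[OF sg] ..
  then show ?thesis using sf sg zf zg by (simp add: E_space_def smooth_add smooth_cmult)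
qed

lemma Re_part_eq: "(\<lambda>x. complex_of_real (Re (f x))) = (\<lambda>x. (1/2) * f x + (1/2) * cnj (f x))"
  by (simp add: fun_eq_iff complex_eq_iff)

lemma Im_part_eq: "(\<lambda>x. complex_of_real (Im (f x))) = (\<lambda>x. (- \<i>/2) * f x + (\<i>/2) * cnj (f x))"
  by (simp add: fun_eq_iff complex_eq_iff)

lemma vderiv_cnj_lincomb:
  "smooth_fun f \<Longrightarrow>
   vderiv k (\<lambda>x. c * f x + d * cnj (f x)) = (\<lambda>x. c * vderiv k f x + d * cnj (vderiv k f x))"
  by (simp only: vderiv_add[OF smooth_cmult smooth_cmult[OF smooth_cnj]] vderiv_cmult[OF smooth_cnj]
      vderiv_cmult vderiv_cnj)

lemma vderiv_Re: "smooth_fun f \<Longrightarrow>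
   vderiv k (\<lambda>x. complex_of_real (Re (f x))) = (\<lambda>x. complex_of_real (Re (vderiv k f x)))"
  unfolding Re_part_eq vderiv_cnj_lincomb by (simp add: fun_eq_iff complex_eq_iff)

lemma vderiv_Im: "smooth_fun f \<Longrightarrow>
   vderiv k (\<lambda>x. complex_of_real (Im (f x))) = (\<lambda>x. complex_of_real (Im (vderiv k f x)))"
  unfolding Im_part_eq vderiv_cnj_lincomb by (simp add: fun_eq_iff complex_eq_iff)

lemma at_most_zeros_transfer:
  assumes "\<And>k x. vderiv k f x = 0 \<Longrightarrow> vderiv k g x = 0" and "at_most_zeros g A K"
  shows "at_most_zeros f A K"
  unfolding at_most_zeros_def
proof (intro allI impI)
  fix S m assume S: "finite S \<and> S \<subseteq> A \<and> (\<forall>x\<in>S. vanishes_to_order f x (m x))"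
  then have "\<forall>x\<in>S. vanishes_to_order g x (m x)" using assms(1) by blast
  then show "sum m S \<le> K" using assms(2) S unfolding at_most_zeros_def by blast
qed

lemma real_or_imaginary_part:
  assumes cl: "closed_cnj (E_space lam n)" and fE: "f \<in> E_space lam n" and nf: "f \<noteq> (\<lambda>x. 0)"
  obtains g where "g \<in> E_space lam n" "real_valued g" "g \<noteq> (\<lambda>x. 0)"
    "\<And>k x. vderiv k f x = 0 \<Longrightarrow> vderiv k g x = 0"
proof -
  have sf: "smooth_fun f" using fE by (simp add: E_space_def)
  have cE: "(\<lambda>x. cnj (f x)) \<in> E_space lam n" using cl fE unfolding closed_cnj_def by blast
  have "(\<lambda>x. complex_of_real (Re (f x))) \<noteq> (\<lambda>x. 0) \<or> (\<lambda>x. complex_of_real (Im (f x))) \<noteq> (\<lambda>x. 0)"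
    using nf by (auto simp: fun_eq_iff complex_eq_iff)
  then show ?thesis
  proof
    assume "(\<lambda>x. complex_of_real (Re (f x))) \<noteq> (\<lambda>x. 0)"
    moreover have "(\<lambda>x. complex_of_real (Re (f x))) \<in> E_space lam n"
      unfolding Re_part_eq by (rule E_space_lincomb[OF fE cE])
    moreover have "real_valued (\<lambda>x. complex_of_real (Re (f x)))" by (simp add: real_valued_def)
    moreover have "vderiv k (\<lambda>x. complex_of_real (Re (f x))) x = 0" if "vderiv k f x = 0" for k x
      using that by (simp add: vderiv_Re[OF sf])
    ultimately show ?thesis using that by blast
  next
    assume "(\<lambda>x. complex_of_real (Im (f x))) \<noteq> (\<lambda>x. 0)"
    moreover have "(\<lambda>x. complex_of_real (Im (f x))) \<in> E_space lam n"
      unfolding Im_part_eq by (rule E_space_lincomb[OF fE cE])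
    moreover have "real_valued (\<lambda>x. complex_of_real (Im (f x)))" by (simp add: real_valued_def)
    moreover have "vderiv k (\<lambda>x. complex_of_real (Im (f x))) x = 0" if "vderiv k f x = 0" for k x
      using that by (simp add: vderiv_Im[OF sf])
    ultimately show ?thesis using that by blast
  qed
qed

lemma width_condition:
  fixes lam :: "nat \<Rightarrow> complex" and a b :: real
  assumes "a < b"
    and "Max {\<bar>Im (lam j)\<bar> | j. j \<le> n} = 0 \<or> b - a < pi / Max {\<bar>Im (lam j)\<bar> | j. j \<le> n}"
  shows "\<forall>j\<le>n. \<bar>Im (lam j)\<bar> * (b - a) < pi"
proof (intro allI impI)
  fix j assume j: "j \<le> n"
  define M where "M = Max {\<bar>Im (lam j)\<bar> | j. j \<le> n}"
  have range: "{\<bar>Im (lam j)\<bar> | j. j \<le> n} = (\<lambda>j. \<bar>Im (lam j)\<bar>) ` {..n}" by auto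
  have le: "\<bar>Im (lam j)\<bar> \<le> M" unfolding M_def range using j by (auto intro: Max_ge)
  show "\<bar>Im (lam j)\<bar> * (b - a) < pi"
  proof (cases "M = 0")
    case True
    then show ?thesis using le by simp
  next
    case False
    then have "M > 0" "b - a < pi / M" using le assms(2) unfolding M_def by auto
    then have "M * (b - a) < pi" by (simp add: pos_less_divide_eq mult.commute)
    moreover have "\<bar>Im (lam j)\<bar> * (b - a) \<le> M * (b - a)" using le assms(1) by simp
    ultimately show ?thesis by linarith
  qed
qed

theorem mainTheorem6:
  fixes lam :: "nat \<Rightarrow> complex" and n :: nat and a b :: real
  assumes "closed_cnj (E_space lam n)"
    and "a < b"
    and "Max {\<bar>Im (lam j)\<bar> | j. j \<le> n} = 0 \<or> b - a < pi / Max {\<bar>Im (lam j)\<bar> | j. j \<le> n}"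
  shows "ext_chebyshev (E_space lam n) n {a..b}"
  unfolding ext_chebyshev_iff
proof (intro ballI impI)
  fix f assume fE: "f \<in> E_space lam n" and nf: "f \<noteq> (\<lambda>x. 0)"
  obtain g where gE: "g \<in> E_space lam n" and rg: "real_valued g" and ng: "g \<noteq> (\<lambda>x. 0)"
    and zeros: "\<And>k x. vderiv k f x = 0 \<Longrightarrow> vderiv k g x = 0"
    using real_or_imaginary_part[OF assms(1) fE nf] by blast
  have "\<forall>j\<le>n. \<bar>Im (lam j)\<bar> * (b - a) < pi" by (rule width_condition[OF assms(2,3)])
  then have "at_most_zeros g {a..b} n"
    using real_solution_zero_bound[of a b n lam g] assms(2) gE rg ng by simp
  with zeros show "at_most_zeros f {a..b} n" by (rule at_most_zeros_transfer)
qed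

end
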